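(* Fix $n$, $m$, a scoring vector $s$ and a distribution $\Psi$ over preference profiles, and suppose there is a function $u$ such that for every vector $k=(k_1,\ldots,k_n)$ of non-negative integers with $\sum_i k_i=m$ and every $i\in[n]$, $EU^k_\Psi(a_i)=u\big(k_i,\sum_{j<i}k_j\big)$. Then among the vectors $k$ maximizing the egalitarian social welfare $SW^e_\Psi(k)=\min_{a}EU^k_\Psi(a)$ there is one that is non-decreasing, i.e. $k_1\le k_2\le\cdots\le k_n$.
   Context: There are $n$ agents $a_1,\ldots,a_n$ and $m$ items. A preference profile assigns to each agent a strict ranking of the items. A scoring vector is $s=(s_1,\ldots,s_m)$ of non-negative rationals with $s_1\ge\cdots\ge s_m$; an agent's value for her $j$-th preferred item is $s_j$, and utilities are additive. Given $k=(k_1,\ldots,k_n)$ with non-negative integer entries summing to $m$, agent $a_1$ first picks $k_1$ items, then $a_2$ picks $k_2$ of the remaining items, etc., each agent greedily picking her most preferred remaining items. $U^k_P(a)$ is the total score of the items agent $a$ receives under profile $P$, and $EU^k_\Psi(a)=\mathbb{E}_{P\sim\Psi}[U^k_P(a)]$. *)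

theory Defs
  imports "HOL-Probability.Probability"
begin

text \<open>Agents are indexed 0..n-1, items 0..m-1.  A preference profile is a list of n
rankings; a ranking is a list listing every item exactly once, most preferred first.
Ranks are 0-based: the agent's value for the item at position j of her ranking is s j.\<close>

definition is_ranking :: "nat \<Rightarrow> nat list \<Rightarrow> bool" where
  "is_ranking m r \<longleftrightarrow> distinct r \<and> set r = {..<m}"

definition is_profile :: "nat \<Rightarrow> nat \<Rightarrow> nat list list \<Rightarrow> bool" where
  "is_profile n m P \<longleftrightarrow> length P = n \<and> (\<forall>r\<in>set P. is_ranking m r)"

definition is_scoring_vector :: "nat \<Rightarrow> (nat \<Rightarrow> real) \<Rightarrow> bool" where
  "is_scoring_vector m s \<longleftrightarrow> (\<forall>j<m. s j \<in> \<rat> \<and> s j \<ge> 0) \<and> (\<forall>i j. i \<le> j \<longrightarrow> j < m \<longrightarrow> s j \<le> s i)"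

definition is_seq :: "nat \<Rightarrow> nat \<Rightarrow> nat list \<Rightarrow> bool" where
  "is_seq n m k \<longleftrightarrow> length k = n \<and> sum_list k = m"

fun taken :: "nat list list \<Rightarrow> nat list \<Rightarrow> nat \<Rightarrow> nat set" where
  "taken P k 0 = {}"
| "taken P k (Suc i) = taken P k i \<union> set (take (k ! i) (filter (\<lambda>x. x \<notin> taken P k i) (P ! i)))"

definition alloc :: "nat list list \<Rightarrow> nat list \<Rightarrow> nat \<Rightarrow> nat set" where
  "alloc P k i = set (take (k ! i) (filter (\<lambda>x. x \<notin> taken P k i) (P ! i)))"

fun pos :: "nat list \<Rightarrow> nat \<Rightarrow> nat" where
  "pos [] x = 0"
| "pos (y # ys) x = (if y = x then 0 else Suc (pos ys x))"

definition U :: "(nat \<Rightarrow> real) \<Rightarrow> nat list list \<Rightarrow> nat list \<Rightarrow> nat \<Rightarrow> real" where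
  "U s P k i = (\<Sum>x\<in>alloc P k i. s (pos (P ! i) x))"

definition EU :: "(nat \<Rightarrow> real) \<Rightarrow> nat list list pmf \<Rightarrow> nat list \<Rightarrow> nat \<Rightarrow> real" where
  "EU s \<Psi> k i = measure_pmf.expectation \<Psi> (\<lambda>P. U s P k i)"

definition SWe :: "nat \<Rightarrow> (nat \<Rightarrow> real) \<Rightarrow> nat list list pmf \<Rightarrow> nat list \<Rightarrow> real" where
  "SWe n s \<Psi> k = Min ((\<lambda>i. EU s \<Psi> k i) ` {..<n})"

end

theory Submission
  imports Defs
begin

text \<open>Swapping an adjacent inversion \<open>a > b\<close> of a picking sequence never lowers the egalitarian
welfare. Agents in other slots keep their number of picks and the number of items picked before
them. The agent moved to the later slot now picks \<open>a \<ge> b\<close> items with fewer items gone, so she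
gains in every profile. The agent moved to the earlier slot picks \<open>b\<close> items with \<open>a\<close> fewer items
gone than the former holder of the later slot; as expected utility depends only on these two
numbers, both can be compared for one agent, in a sequence where the \<open>a\<close> picks are moved into the
preceding slot (in the first slot, the top-\<open>b\<close> score bounds everything). Among the welfare
maximisers, one maximising \<open>\<Sum>i. i \<cdot> k\<^sub>i\<close> therefore has no inversion.\<close>

subsection \<open>Scores of greedy picks\<close>

definition list_score :: "(nat \<Rightarrow> real) \<Rightarrow> nat list \<Rightarrow> nat list \<Rightarrow> real" where
  "list_score s r xs = (\<Sum>x\<leftarrow>xs. s (pos r x))"

lemma list_score_Nil [simp]: "list_score s r [] = 0"
  by (simp add: list_score_def)

lemma list_score_Cons [simp]: "list_score s r (x # xs) = s (pos r x) + list_score s r xs"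
  by (simp add: list_score_def)

lemma list_score_append: "list_score s r (xs @ ys) = list_score s r xs + list_score s r ys"
  by (simp add: list_score_def)

lemma list_score_Cons_ranking:
  "y \<notin> set xs \<Longrightarrow> list_score s (y # r) xs = list_score (\<lambda>j. s (Suc j)) r xs"
  by (induction xs) auto

lemma list_score_nonneg: "(\<And>x. x \<in> set xs \<Longrightarrow> 0 \<le> s (pos r x)) \<Longrightarrow> 0 \<le> list_score s r xs"
  by (induction xs) auto

lemma pos_less_length: "x \<in> set r \<Longrightarrow> pos r x < length r"
  by (induction r) auto

lemma list_score_take_self:
  "distinct r \<Longrightarrow> list_score s r (take b r) = (\<Sum>j<min b (length r). s j)"
proof (induction r arbitrary: s b)
  case (Cons y r)
  show ?case
  proof (cases b)
    case (Suc c)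
    have "y \<notin> set (take c r)"
      using Cons.prems by (auto dest: in_set_takeD)
    then have "list_score s (y # r) (take b (y # r)) = s 0 + list_score (\<lambda>j. s (Suc j)) r (take c r)"
      using Suc by (simp add: list_score_Cons_ranking)
    also have "\<dots> = s 0 + (\<Sum>j<min c (length r). s (Suc j))"
      using Cons by simp
    also have "\<dots> = (\<Sum>j<Suc (min c (length r)). s j)"
      by (rule sum.lessThan_Suc_shift[symmetric])
    finally show ?thesis
      using Suc by simp
  qed simp
qed simp

text \<open>If the head \<open>y\<close> of the ranking is removed on the left only, the left side picks one extra
item further down the ranking instead, and that item scores at most \<open>s 0\<close>.\<close>

lemma greedy_pick_score_antimono:
  assumes "distinct r" "A \<subseteq> B"
    and antitone: "\<And>i j. i \<le> j \<Longrightarrow> j < length r \<Longrightarrow> s j \<le> s i"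
    and nonneg: "\<And>j. j < length r \<Longrightarrow> 0 \<le> s j"
  shows "list_score s r (take b (filter (\<lambda>x. x \<notin> B) r))
           \<le> list_score s r (take b (filter (\<lambda>x. x \<notin> A) r))"
  using assms
proof (induction r arbitrary: s b)
  case (Cons y r)
  define s' where "s' = (\<lambda>j. s (Suc j))"
  have IH: "list_score s' r (take c (filter (\<lambda>x. x \<notin> B) r))
              \<le> list_score s' r (take c (filter (\<lambda>x. x \<notin> A) r))" for c
    using Cons.prems by (intro Cons.IH) (auto simp: s'_def)
  have "y \<notin> set (take c (filter P r))" for c P
    using Cons.prems(1) by (auto dest: in_set_takeD)
  then have shift: "list_score s (y # r) (take c (filter P r)) = list_score s' r (take c (filter P r))"
    for c P by (simp add: list_score_Cons_ranking s'_def)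
  show ?case
  proof (cases "y \<in> A")
    case True
    with Cons.prems(2) have "y \<in> B"
      by blast
    with True show ?thesis
      using IH shift by simp
  next
    case notA: False
    show ?thesis
    proof (cases b)
      case (Suc c)
      have right: "list_score s (y # r) (take b (filter (\<lambda>x. x \<notin> A) (y # r)))
                     = s 0 + list_score s' r (take c (filter (\<lambda>x. x \<notin> A) r))"
        using notA Suc shift by simp
      show ?thesis
      proof (cases "y \<in> B")
        case False
        then show ?thesis
          using Suc shift right IH[of c] by simp
      next
        case True
        let ?F = "filter (\<lambda>x. x \<notin> B) r"
        have split: "take b ?F = take c ?F @ take 1 (drop c ?F)"
          using Suc take_add[of c 1 ?F] by simp
        have "s' (pos r x) \<le> s 0" if "x \<in> set r" for x
          using Cons.prems(3) pos_less_length[OF that] by (simp add: s'_def)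
        then have "s' (pos r x) \<le> s 0" if "x \<in> set (drop c ?F)" for x
          using that by (auto dest: in_set_dropD)
        then have "list_score s' r (take 1 (drop c ?F)) \<le> s 0"
          using Cons.prems(4)[of 0] by (cases "drop c ?F") auto
        moreover have "list_score s (y # r) (take b (filter (\<lambda>x. x \<notin> B) (y # r)))
            = list_score s' r (take b ?F)"
          using True shift[of b] by simp
        ultimately have "list_score s (y # r) (take b (filter (\<lambda>x. x \<notin> B) (y # r)))
            \<le> list_score s' r (take c ?F) + s 0"
          by (simp only: split list_score_append)
        then show ?thesis
          using right IH[of c] by linarith
      qed
    qed simp
  qed
qed simp

lemma list_score_take_mono:
  assumes "b \<le> a" "\<And>x. x \<in> set xs \<Longrightarrow> 0 \<le> s (pos r x)"
  shows "list_score s r (take b xs) \<le> list_score s r (take a xs)"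
proof -
  have "take a xs = take b xs @ take (a - b) (drop b xs)"
    using take_add[of b "a - b" xs] \<open>b \<le> a\<close> by simp
  moreover have "0 \<le> list_score s r (take (a - b) (drop b xs))"
    using assms(2) by (intro list_score_nonneg) (auto dest: in_set_takeD in_set_dropD)
  ultimately show ?thesis
    by (simp add: list_score_append)
qed

lemma ranking_facts: "is_ranking m r \<Longrightarrow> distinct r \<and> length r = m"
  unfolding is_ranking_def using distinct_card by fastforce

lemma scoring_vector_antitone: "is_scoring_vector m s \<Longrightarrow> i \<le> j \<Longrightarrow> j < m \<Longrightarrow> s j \<le> s i"
  and scoring_vector_nonneg: "is_scoring_vector m s \<Longrightarrow> j < m \<Longrightarrow> 0 \<le> s j"
  unfolding is_scoring_vector_def by auto

lemma greedy_pick_score_mono: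
  assumes "is_ranking m r" "is_scoring_vector m s" "A \<subseteq> B" "b \<le> a"
  shows "list_score s r (take b (filter (\<lambda>x. x \<notin> B) r))
           \<le> list_score s r (take a (filter (\<lambda>x. x \<notin> A) r))"
proof -
  from ranking_facts[OF assms(1)] have r: "distinct r" "length r = m" by auto
  have nonneg: "0 \<le> s (pos r x)" if "x \<in> set (filter (\<lambda>x. x \<notin> A) r)" for x
    using that pos_less_length r scoring_vector_nonneg[OF assms(2)] by auto
  have "list_score s r (take b (filter (\<lambda>x. x \<notin> B) r))
          \<le> list_score s r (take b (filter (\<lambda>x. x \<notin> A) r))"
    using r scoring_vector_antitone[OF assms(2)] scoring_vector_nonneg[OF assms(2)]
    by (intro greedy_pick_score_antimono[OF r(1) assms(3)]) auto
  also have "\<dots> \<le> list_score s r (take a (filter (\<lambda>x. x \<notin> A) r))"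
    using list_score_take_mono[OF assms(4)] nonneg by blast
  finally show ?thesis .
qed

lemma greedy_pick_score_le_top:
  assumes "is_ranking m r" "is_scoring_vector m s"
  shows "list_score s r (take b (filter (\<lambda>x. x \<notin> B) r)) \<le> (\<Sum>j<min b m. s j)"
  using greedy_pick_score_mono[OF assms, of "{}" B b b] ranking_facts[OF assms(1)]
  by (simp add: list_score_take_self)

lemma profile_ranking: "is_profile n m P \<Longrightarrow> i < n \<Longrightarrow> is_ranking m (P ! i)"
  unfolding is_profile_def by auto

lemma U_eq_list_score:
  "is_ranking m (P ! i) \<Longrightarrow> U s P k i = list_score s (P ! i) (take (k ! i) (filter (\<lambda>x. x \<notin> taken P k i) (P ! i)))"
  unfolding U_def alloc_def list_score_def
  by (simp add: sum_list_distinct_conv_sum_set ranking_facts)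

lemma U_le_top:
  "is_ranking m (P ! i) \<Longrightarrow> is_scoring_vector m s \<Longrightarrow> U s P k i \<le> (\<Sum>j<min (k ! i) m. s j)"
  by (simp add: U_eq_list_score greedy_pick_score_le_top)

lemma U_first_agent:
  "is_ranking m (P ! 0) \<Longrightarrow> U s P k 0 = (\<Sum>j<min (k ! 0) m. s j)"
  by (simp add: U_eq_list_score list_score_take_self ranking_facts)

lemma U_mono_taken:
  assumes "is_ranking m (P ! i)" "is_scoring_vector m s"
    and "taken P k' i \<subseteq> taken P k i" "k ! i \<le> k' ! i"
  shows "U s P k i \<le> U s P k' i"
  using assms by (simp add: U_eq_list_score greedy_pick_score_mono)

lemma U_bounds:
  assumes "is_ranking m (P ! i)" "is_scoring_vector m s"
  shows "0 \<le> U s P k i" "U s P k i \<le> (\<Sum>j<m. s j)"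
proof -
  have "0 \<le> s (pos (P ! i) x)" if "x \<in> set (P ! i)" for x
    using scoring_vector_nonneg[OF assms(2)] pos_less_length[OF that] ranking_facts[OF assms(1)]
    by simp
  then show "0 \<le> U s P k i"
    using assms(1) by (auto simp: U_eq_list_score intro!: list_score_nonneg dest: in_set_takeD)
  have "(\<Sum>j<min (k ! i) m. s j) \<le> (\<Sum>j<m. s j)"
    using scoring_vector_nonneg[OF assms(2)] by (intro sum_mono2) auto
  then show "U s P k i \<le> (\<Sum>j<m. s j)"
    using U_le_top[OF assms, of k] by linarith
qed

lemma taken_eq_prefix: "(\<And>l. l < j \<Longrightarrow> k ! l = k' ! l) \<Longrightarrow> taken P k j = taken P k' j"
  by (induction j) auto

lemma taken_Suc_mono:
  assumes "\<And>l. l < j \<Longrightarrow> k ! l = k' ! l" "k ! j \<le> k' ! j"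
  shows "taken P k (Suc j) \<subseteq> taken P k' (Suc j)"
  using taken_eq_prefix[of j k k' P, OF assms(1)]
    set_take_subset_set_take[OF assms(2), of "filter (\<lambda>x. x \<notin> taken P k' j) (P ! j)"]
  by auto

subsection \<open>Swapping an inversion\<close>

context
  fixes n m :: nat and s :: "nat \<Rightarrow> real" and \<Psi> :: "nat list list pmf"
  assumes scoring: "is_scoring_vector m s"
    and profiles: "\<forall>P\<in>set_pmf \<Psi>. is_profile n m P"
begin

lemma U_integrable: "i < n \<Longrightarrow> integrable (measure_pmf \<Psi>) (\<lambda>P. U s P k i)"
  using U_bounds[OF profile_ranking scoring] profiles
  by (intro measure_pmf.integrable_const_bound[where B = "\<Sum>j<m. s j"] AE_pmfI) auto

lemma EU_mono:
  assumes "i < n" "j < n" "\<And>P. P \<in> set_pmf \<Psi> \<Longrightarrow> U s P k i \<le> U s P k' j"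
  shows "EU s \<Psi> k i \<le> EU s \<Psi> k' j"
  unfolding EU_def using assms
  by (intro integral_mono_AE U_integrable AE_pmfI) auto

lemma EU_mono_taken:
  assumes "i < n" "\<And>P. taken P k' i \<subseteq> taken P k i" "k ! i \<le> k' ! i"
  shows "EU s \<Psi> k i \<le> EU s \<Psi> k' i"
  using assms profiles profile_ranking
  by (intro EU_mono U_mono_taken[OF _ scoring]) auto

lemma EU_le_first_agent:
  assumes "i < n" "k ! i \<le> k' ! 0"
  shows "EU s \<Psi> k i \<le> EU s \<Psi> k' 0"
proof (rule EU_mono)
  fix P assume "P \<in> set_pmf \<Psi>"
  then have "is_ranking m (P ! i)" "is_ranking m (P ! 0)"
    using profiles profile_ranking assms(1) by auto
  moreover have "(\<Sum>j<min (k ! i) m. s j) \<le> (\<Sum>j<min (k' ! 0) m. s j)"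
    using assms(2) scoring_vector_nonneg[OF scoring] by (intro sum_mono2) auto
  ultimately show "U s P k i \<le> U s P k' 0"
    using U_le_top[OF _ scoring, of P i k] U_first_agent[of m P s k'] by linarith
qed (use assms in auto)

context
  fixes u :: "nat \<Rightarrow> nat \<Rightarrow> real"
  assumes EU_factor: "\<forall>k. is_seq n m k \<longrightarrow> (\<forall>i<n. EU s \<Psi> k i = u (k ! i) (sum_list (take i k)))"
begin

lemma EU_eq_of_same_slot:
  assumes "is_seq n m k" "is_seq n m k'" "i < n" "j < n"
    and "k ! i = k' ! j" "sum_list (take i k) = sum_list (take j k')"
  shows "EU s \<Psi> k i = EU s \<Psi> k' j"
  using assms EU_factor by metis

lemma EU_swap_later_agent:
  assumes "is_seq n m (xs @ [a, b] @ ys)" "b < a"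
  shows "EU s \<Psi> (xs @ [a, b] @ ys) (Suc (length xs)) \<le> EU s \<Psi> (xs @ [b, a] @ ys) (Suc (length xs))"
  using assms
  by (intro EU_mono_taken taken_Suc_mono) (auto simp: is_seq_def nth_append)

lemma EU_swap_earlier_agent:
  assumes k: "is_seq n m (xs @ [a, b] @ ys)"
  shows "EU s \<Psi> (xs @ [a, b] @ ys) (Suc (length xs)) \<le> EU s \<Psi> (xs @ [b, a] @ ys) (length xs)"
proof (cases xs rule: rev_cases)
  case Nil
  have "EU s \<Psi> ([a, b] @ ys) 1 \<le> EU s \<Psi> ([b, a] @ ys) 0"
    by (rule EU_le_first_agent) (use k Nil in \<open>auto simp: is_seq_def\<close>)
  with Nil show ?thesis
    by simp
next
  case (snoc xs0 c)
  define k'' where "k'' = xs0 @ [c + a, b, 0] @ ys"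
  have "is_seq n m k''"
    using k snoc by (auto simp: is_seq_def k''_def)
  then have "EU s \<Psi> (xs @ [a, b] @ ys) (Suc (length xs)) = EU s \<Psi> k'' (length xs)"
    using k snoc by (intro EU_eq_of_same_slot) (auto simp: is_seq_def k''_def nth_append)
  also have "\<dots> \<le> EU s \<Psi> (xs @ [b, a] @ ys) (length xs)"
  proof (rule EU_mono_taken)
    have "taken P (xs0 @ [c] @ [b, a] @ ys) (Suc (length xs0)) \<subseteq> taken P k'' (Suc (length xs0))" for P
      unfolding k''_def by (rule taken_Suc_mono) (auto simp: nth_append)
    then show "taken P (xs @ [b, a] @ ys) (length xs) \<subseteq> taken P k'' (length xs)" for P
      using snoc by simp
  qed (use k snoc in \<open>auto simp: is_seq_def k''_def nth_append\<close>)
  finally show ?thesis .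
qed

lemma SWe_swap_inversion:
  assumes k: "is_seq n m (xs @ [a, b] @ ys)" and "b < a"
  shows "SWe n s \<Psi> (xs @ [a, b] @ ys) \<le> SWe n s \<Psi> (xs @ [b, a] @ ys)"
proof -
  let ?k = "xs @ [a, b] @ ys" and ?k' = "xs @ [b, a] @ ys" and ?i = "length xs"
  have k': "is_seq n m ?k'"
    using k by (simp add: is_seq_def)
  have n: "n = ?i + 2 + length ys"
    using k by (simp add: is_seq_def)
  have SWe_le: "SWe n s \<Psi> ?k \<le> EU s \<Psi> ?k j" if "j < n" for j
    unfolding SWe_def using that by (intro Min_le) auto
  have "SWe n s \<Psi> ?k \<le> EU s \<Psi> ?k' j" if j: "j < n" for j
  proof -
    consider "j < ?i" | "j = ?i" | "j = Suc ?i" | "Suc ?i < j"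
      by linarith
    then show ?thesis
    proof cases
      case 2
      then show ?thesis
        using SWe_le[of "Suc ?i"] EU_swap_earlier_agent[OF k] n by simp
    next
      case 3
      then show ?thesis
        using SWe_le[of "Suc ?i"] EU_swap_later_agent[OF k \<open>b < a\<close>] n by simp
    next
      case 1
      then have "EU s \<Psi> ?k' j = EU s \<Psi> ?k j"
        using j k k' by (intro EU_eq_of_same_slot) (auto simp: nth_append)
      then show ?thesis
        using SWe_le j by simp
    next
      case 4
      then have "EU s \<Psi> ?k' j = EU s \<Psi> ?k j"
        using j k k' by (intro EU_eq_of_same_slot) (auto simp: nth_append not_less take_Cons')
      then show ?thesis
        using SWe_le j by simp
    qed
  qed
  then show ?thesis
    unfolding SWe_def[of n s \<Psi> ?k'] using n by (subst Min_ge_iff) auto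
qed

end

end

subsection \<open>Sorted maximisers\<close>

text \<open>\<open>index_weight k = (\<Sum>i<length k. i * k ! i)\<close>, which swapping an adjacent inversion raises.\<close>

fun index_weight :: "nat list \<Rightarrow> nat" where
  "index_weight [] = 0"
| "index_weight (x # xs) = sum_list xs + index_weight xs"

lemma index_weight_append:
  "index_weight (xs @ ys) = index_weight xs + length xs * sum_list ys + index_weight ys"
  by (induction xs) (auto simp: algebra_simps)

lemma exists_sorted_maximizer:
  fixes f :: "nat list \<Rightarrow> 'a :: linorder"
  assumes "finite S" "S \<noteq> {}"
    and swap: "\<And>xs a b ys. xs @ [a, b] @ ys \<in> S \<Longrightarrow> b < a
                 \<Longrightarrow> xs @ [b, a] @ ys \<in> S \<and> f (xs @ [a, b] @ ys) \<le> f (xs @ [b, a] @ ys)"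
  shows "\<exists>k\<in>S. (\<forall>k'\<in>S. f k' \<le> f k) \<and> sorted k"
proof -
  define M where "M = {k\<in>S. \<forall>k'\<in>S. f k' \<le> f k}"
  have "Max (f ` S) \<in> f ` S"
    using assms(1,2) by simp
  then obtain k0 where "k0 \<in> S" "f k0 = Max (f ` S)"
    by auto
  then have "k0 \<in> M"
    using assms(1) by (auto simp: M_def)
  moreover have "finite M"
    using assms(1) by (simp add: M_def)
  ultimately have "Max (index_weight ` M) \<in> index_weight ` M"
    by (intro Max_in) auto
  then obtain k where k: "k \<in> M" and "index_weight k = Max (index_weight ` M)"
    by auto
  with \<open>finite M\<close> have k_max: "index_weight k' \<le> index_weight k" if "k' \<in> M" for k'
    using that by simp
  have "sorted k"
  proof (rule ccontr)
    assume "\<not> sorted k"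
    then obtain i where i: "Suc i < length k" "k ! Suc i < k ! i"
      unfolding sorted_iff_nth_Suc by (auto simp: not_le)
    define xs ys where "xs = take i k" and "ys = drop (Suc (Suc i)) k"
    define k' where "k' = xs @ [k ! Suc i, k ! i] @ ys"
    have k_split: "k = xs @ [k ! i, k ! Suc i] @ ys"
      using i(1) id_take_nth_drop[of i k] Cons_nth_drop_Suc[of "Suc i" k]
      by (simp add: xs_def ys_def)
    with k have "k' \<in> S" "f k \<le> f k'"
      using swap[of xs "k ! i" "k ! Suc i" ys] i(2)
      unfolding k'_def M_def by (simp_all add: k_split[symmetric])
    with k have "k' \<in> M"
      unfolding M_def by (auto intro: order_trans)
    then have "index_weight k' \<le> index_weight k"
      by (rule k_max)
    moreover have "index_weight k = index_weight (xs @ [k ! i, k ! Suc i] @ ys)"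
      using k_split by (rule arg_cong)
    ultimately show False
      using i(2) by (simp add: k'_def index_weight_append algebra_simps)
  qed
  with k show ?thesis
    by (auto simp: M_def)
qed

lemma finite_seqs: "finite {k. is_seq n m k}"
proof -
  have "{k. is_seq n m k} \<subseteq> {xs. set xs \<subseteq> {..m} \<and> length xs = n}"
    by (auto simp: is_seq_def intro: member_le_sum_list)
  then show ?thesis
    using finite_lists_length_eq[of "{..m}" n] finite_subset by blast
qed

theorem proposition1:
  fixes n m :: nat and s :: "nat \<Rightarrow> real" and \<Psi> :: "nat list list pmf"
  assumes n_pos: "n \<ge> 1"
    and scoring: "is_scoring_vector m s"
    and profiles: "\<forall>P\<in>set_pmf \<Psi>. is_profile n m P"
    and u: "\<exists>u :: nat \<Rightarrow> nat \<Rightarrow> real. \<forall>k. is_seq n m k \<longrightarrow>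
              (\<forall>i<n. EU s \<Psi> k i = u (k ! i) (sum_list (take i k)))"
  shows "\<exists>k. is_seq n m k \<and> (\<forall>k'. is_seq n m k' \<longrightarrow> SWe n s \<Psi> k' \<le> SWe n s \<Psi> k)
             \<and> sorted k"
proof -
  obtain u where EU_factor: "\<forall>k. is_seq n m k \<longrightarrow> (\<forall>i<n. EU s \<Psi> k i = u (k ! i) (sum_list (take i k)))"
    using u by blast
  have "m # replicate (n - 1) 0 \<in> {k. is_seq n m k}"
    using n_pos by (simp add: is_seq_def)
  moreover have "xs @ [b, a] @ ys \<in> {k. is_seq n m k}
      \<and> SWe n s \<Psi> (xs @ [a, b] @ ys) \<le> SWe n s \<Psi> (xs @ [b, a] @ ys)"
    if "xs @ [a, b] @ ys \<in> {k. is_seq n m k}" "b < a" for xs a b ys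
    using that SWe_swap_inversion[OF scoring profiles EU_factor] by (auto simp: is_seq_def)
  ultimately show ?thesis
    using exists_sorted_maximizer[OF finite_seqs, where f = "SWe n s \<Psi>"] by blast
qed

end
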